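(* Let $X$ and $Y$ be real Banach spaces. Then (a) $\mathrm{SA}_{\mathcal K}(X,Y)\subset\mathrm{D}_{\mathcal K}(X,Y)\subset\mathrm{LDA}_{\mathcal K}(X,Y)\subset\mathrm{DA}_{\mathcal K}(X,Y)\subset\mathrm{A}_{\mathcal K}(X,Y)$; (b) $\mathrm{A}_{\mathcal K}(X,Y)=\mathrm{Lip}_{0\mathcal K}(X,Y)$.
   Context: $\widetilde X=\{(x,y)\in X^2:x\neq y\}$. $\mathrm{Lip}_0(X,Y)$ is the Banach space of Lipschitz $f\colon X\to Y$ with $f(0)=0$ and norm $\|f\|=\sup_{(x,y)\in\widetilde X}\|f(x)-f(y)\|/\|x-y\|$; $\mathrm{Lip}_{0\mathcal K}(X,Y)$ is the set of $f\in\mathrm{Lip}_0(X,Y)$ whose set of slopes $\{\frac{f(x)-f(y)}{\|x-y\|}:(x,y)\in\widetilde X\}$ is relatively compact in $Y$. For $f\in\mathrm{Lip}_0(X,Y)$: $f\in\mathrm{SA}(X,Y)$ if $\|f(x)-f(y)\|=\|f\|\,\|x-y\|$ for some $(x,y)\in\widetilde X$; $f\in\mathrm{D}(X,Y)$ if there are $x\in X$, $e\in S_X$ with $f'(x,e)=\lim_{t\to0}\frac{f(x+te)-f(x)}{t}$ existing in $Y$ and $\|f'(x,e)\|=\|f\|$; $f\in\mathrm{A}(X,Y)$ if there are $z\in Y$ with $\|z\|=\|f\|$ and $(x_n,y_n)\in\widetilde X$ with $\frac{f(x_n)-f(y_n)}{\|x_n-y_n\|}\to z$; $f\in\mathrm{DA}(X,Y)$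 if additionally $\frac{x_n-y_n}{\|x_n-y_n\|}\to u$ for some $u\in S_X$; $f\in\mathrm{LDA}(X,Y)$ if additionally also $x_n,y_n\to\bar x$ for some $\bar x\in X$. For each of these sets $\mathrm{M}$, $\mathrm{M}_{\mathcal K}(X,Y)=\mathrm{M}(X,Y)\cap\mathrm{Lip}_{0\mathcal K}(X,Y)$. *)

theory Defs
  imports "HOL-Analysis.Analysis"
begin

definition slopes :: "('a::real_normed_vector \<Rightarrow> 'b::real_normed_vector) \<Rightarrow> 'b set" where
  "slopes f = {(f x - f y) /\<^sub>R norm (x - y) | x y. x \<noteq> y}"

definition lipnorm :: "('a::real_normed_vector \<Rightarrow> 'b::real_normed_vector) \<Rightarrow> real" where
  "lipnorm f = (SUP p \<in> {(x, y). x \<noteq> y}. norm (f (fst p) - f (snd p)) / norm (fst p - snd p))"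

definition Lip0 :: "('a::real_normed_vector \<Rightarrow> 'b::real_normed_vector) set" where
  "Lip0 = {f. f 0 = 0 \<and> bdd_above {norm (f x - f y) / norm (x - y) | x y. x \<noteq> y}}"

definition Lip0K :: "('a::real_normed_vector \<Rightarrow> 'b::real_normed_vector) set" where
  "Lip0K = {f \<in> Lip0. compact (closure (slopes f))}"

definition SA :: "('a::real_normed_vector \<Rightarrow> 'b::real_normed_vector) set" where
  "SA = {f \<in> Lip0. \<exists>x y. x \<noteq> y \<and> norm (f x - f y) = lipnorm f * norm (x - y)}"

definition Dset :: "('a::real_normed_vector \<Rightarrow> 'b::real_normed_vector) set" where
  "Dset = {f \<in> Lip0. \<exists>x e z. norm e = 1 \<and>
      ((\<lambda>t::real. (f (x + t *\<^sub>R e) - f x) /\<^sub>R t) \<longlongrightarrow> z) (at 0) \<and> norm z = lipnorm f}"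

definition Aset :: "('a::real_normed_vector \<Rightarrow> 'b::real_normed_vector) set" where
  "Aset = {f \<in> Lip0. \<exists>z xs ys. norm z = lipnorm f \<and> (\<forall>n. xs n \<noteq> ys n) \<and>
      (\<lambda>n. (f (xs n) - f (ys n)) /\<^sub>R norm (xs n - ys n)) \<longlonglongrightarrow> z}"

definition DA :: "('a::real_normed_vector \<Rightarrow> 'b::real_normed_vector) set" where
  "DA = {f \<in> Lip0. \<exists>z u xs ys. norm z = lipnorm f \<and> norm u = 1 \<and> (\<forall>n. xs n \<noteq> ys n) \<and>
      (\<lambda>n. (f (xs n) - f (ys n)) /\<^sub>R norm (xs n - ys n)) \<longlonglongrightarrow> z \<and>
      (\<lambda>n. (xs n - ys n) /\<^sub>R norm (xs n - ys n)) \<longlonglongrightarrow> u}"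

definition LDA :: "('a::real_normed_vector \<Rightarrow> 'b::real_normed_vector) set" where
  "LDA = {f \<in> Lip0. \<exists>z u xb xs ys. norm z = lipnorm f \<and> norm u = 1 \<and> (\<forall>n. xs n \<noteq> ys n) \<and>
      (\<lambda>n. (f (xs n) - f (ys n)) /\<^sub>R norm (xs n - ys n)) \<longlonglongrightarrow> z \<and>
      (\<lambda>n. (xs n - ys n) /\<^sub>R norm (xs n - ys n)) \<longlonglongrightarrow> u \<and>
      xs \<longlonglongrightarrow> xb \<and> ys \<longlonglongrightarrow> xb}"

end

theory Submission
  imports Defs
begin

(* If f attains its Lipschitz constant L at a pair x, y, then the curve g s = f (y + s e) with
   e = (x - y) / |x - y| attains L on every subinterval of [0, |x - y|], so wherever g is
   differentiable inside that interval its derivative has norm L; this gives (a).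
   Such points exist because a Lipschitz curve whose chord slopes lie in a compact set K is
   differentiable almost everywhere. If the difference quotients at t do not converge, then for some
   y in a countable dense subset of K and some rho < sigma they come closer than rho to y and also
   farther than sigma from y at arbitrarily small scales. A two-level Vitali covering, by steep
   intervals and then by flat intervals inside them, shows that the set of such t has outer measure
   at most (M - sigma) / (M - rho) times its own, hence is null.
   For (b), a point of maximal norm in the compact closure of the slope set is a limit of slopes and
   has norm L. *)

definition chord_slope :: "(real \<Rightarrow> 'b::real_normed_vector) \<Rightarrow> real \<Rightarrow> real \<Rightarrow> 'b" where
  "chord_slope g s t = (g t - g s) /\<^sub>R (t - s)"

lemma chord_slope_commute: "chord_slope g s t = chord_slope g t s"
proof -
  have "(g t - g s) /\<^sub>R (t - s) = (- (g s - g t)) /\<^sub>R (- (s - t))"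
    by simp
  then show ?thesis
    unfolding chord_slope_def by (simp only: scaleR_minus_left inverse_minus_eq scaleR_minus_right minus_minus)
qed

lemma norm_diff_eq_chord_slope:
  "s < t \<Longrightarrow> norm (g t - g s) = (t - s) * norm (chord_slope g s t)"
  unfolding chord_slope_def by simp

lemma norm_diff_le_three_steps:
  fixes g :: "'a \<Rightarrow> 'b::real_normed_vector"
  shows "norm (g d - g a) \<le> norm (g b - g a) + norm (g c - g b) + norm (g d - g c)"
proof -
  have "g d - g a = (g b - g a) + (g c - g b) + (g d - g c)"
    by simp
  then show ?thesis
    by (metis norm_triangle_le norm_triangle_ineq add_right_mono)
qed

lemma disjoint_intervals_remove:
  fixes F :: "(real \<times> real) set"
  assumes "\<And>i. i \<in> F \<Longrightarrow> fst i < snd i" "pairwise (\<lambda>i j. disjnt {fst i..snd i} {fst j..snd j}) F"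
    and "(l, r) \<in> F"
  shows "F - {(l, r)} = {i \<in> F. snd i < l} \<union> {i \<in> F. r < fst i}"
proof (intro equalityI subsetI)
  fix i assume "i \<in> F - {(l, r)}"
  then have "disjnt {fst i..snd i} {l..r}"
    using assms(2,3) unfolding pairwise_def by fastforce
  moreover have "fst i < snd i" "l < r"
    using assms(1) \<open>i \<in> F - {(l, r)}\<close> \<open>(l, r) \<in> F\<close> by force+
  ultimately have "snd i < l \<or> r < fst i"
    by (auto simp: disjnt_def)
  then show "i \<in> {i \<in> F. snd i < l} \<union> {i \<in> F. r < fst i}"
    using \<open>i \<in> F - {(l, r)}\<close> by auto
qed (use assms(1,3) in force)

lemma norm_increment_le_flat_intervals:
  fixes g :: "real \<Rightarrow> 'b::real_normed_vector" and F :: "(real \<times> real) set"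
  assumes Lip: "\<And>s t. s \<le> t \<Longrightarrow> norm (g t - g s) \<le> M * (t - s)"
    and flat: "\<And>i. i \<in> F \<Longrightarrow> norm (g (snd i) - g (fst i)) \<le> \<rho> * (snd i - fst i)"
    and "finite F" "a \<le> b"
    and inside: "\<And>i. i \<in> F \<Longrightarrow> fst i < snd i \<and> {fst i..snd i} \<subseteq> {a..b}"
    and disj: "pairwise (\<lambda>i j. disjnt {fst i..snd i} {fst j..snd j}) F"
  shows "norm (g b - g a) \<le> M * (b - a) - (M - \<rho>) * (\<Sum>i\<in>F. snd i - fst i)"
  using \<open>finite F\<close> \<open>a \<le> b\<close> inside disj flat
proof (induction F arbitrary: a b rule: finite_psubset_induct)
  case (psubset F)
  show ?case
  proof (cases "F = {}")
    case True
    then show ?thesis using Lip[OF psubset.prems(1)] by simp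
  next
    case False
    then obtain l r where i0: "(l, r) \<in> F" by auto
    have lr: "l < r" "a \<le> l" "r \<le> b"
      using psubset.prems(2)[OF i0] by auto
    define FL where "FL = {i \<in> F. snd i < l}"
    define FR where "FR = {i \<in> F. r < fst i}"
    have rest: "F - {(l, r)} = FL \<union> FR"
      unfolding FL_def FR_def using psubset.prems(2,3) i0 by (intro disjoint_intervals_remove) auto
    have FL_sub: "FL \<subset> F" and FR_sub: "FR \<subset> F"
      using rest i0 by blast+
    have left: "norm (g l - g a) \<le> M * (l - a) - (M - \<rho>) * (\<Sum>i\<in>FL. snd i - fst i)"
    proof (rule psubset.IH[OF FL_sub lr(2)])
      fix i assume "i \<in> FL"
      then show "fst i < snd i \<and> {fst i..snd i} \<subseteq> {a..l}"
        using psubset.prems(2) by (fastforce simp: FL_def)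
    qed (use psubset.prems FL_sub in \<open>auto intro: pairwise_subset\<close>)
    have right: "norm (g b - g r) \<le> M * (b - r) - (M - \<rho>) * (\<Sum>i\<in>FR. snd i - fst i)"
    proof (rule psubset.IH[OF FR_sub lr(3)])
      fix i assume "i \<in> FR"
      then show "fst i < snd i \<and> {fst i..snd i} \<subseteq> {r..b}"
        using psubset.prems(2) by (fastforce simp: FR_def)
    qed (use psubset.prems FR_sub in \<open>auto intro: pairwise_subset\<close>)
    have middle: "norm (g r - g l) \<le> \<rho> * (r - l)"
      using psubset.prems(4)[OF i0] by simp
    have "FL \<inter> FR = {}" "finite FL" "finite FR"
      using lr psubset.prems(2) psubset.hyps FL_sub FR_sub by (fastforce simp: FL_def FR_def)+
    then have sum_F: "(\<Sum>i\<in>F. snd i - fst i) = (r - l) + (\<Sum>i\<in>FL. snd i - fst i) + (\<Sum>i\<in>FR. snd i - fst i)"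
      using psubset.hyps i0 by (simp add: sum.remove[of F "(l, r)"] rest sum.union_disjoint)
    show ?thesis
      using left right middle norm_diff_le_three_steps[of g b a l r] unfolding sum_F
      by (simp add: algebra_simps)
  qed
qed

lemma sum_lengths_flat_within_steep:
  fixes g :: "real \<Rightarrow> 'b::real_normed_vector" and F :: "(real \<times> real) set"
  assumes Lip: "\<And>s t. s \<le> t \<Longrightarrow> norm (g t - g s) \<le> M * (t - s)" and "\<rho> < M"
    and flat: "\<And>i. i \<in> F \<Longrightarrow> norm (g (snd i) - g (fst i)) \<le> \<rho> * (snd i - fst i)"
    and "finite F" "a \<le> b"
    and inside: "\<And>i. i \<in> F \<Longrightarrow> fst i < snd i \<and> {fst i..snd i} \<subseteq> {a..b}"
    and disj: "pairwise (\<lambda>i j. disjnt {fst i..snd i} {fst j..snd j}) F"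
    and steep: "\<sigma> * (b - a) \<le> norm (g b - g a)"
  shows "(\<Sum>i\<in>F. snd i - fst i) \<le> (M - \<sigma>) / (M - \<rho>) * (b - a)"
proof -
  have "norm (g b - g a) \<le> M * (b - a) - (M - \<rho>) * (\<Sum>i\<in>F. snd i - fst i)"
    using norm_increment_le_flat_intervals[OF Lip flat \<open>finite F\<close> \<open>a \<le> b\<close> inside disj] by blast
  then have "(M - \<rho>) * (\<Sum>i\<in>F. snd i - fst i) \<le> (M - \<sigma>) * (b - a)"
    using steep by (simp add: algebra_simps)
  then show ?thesis
    using \<open>\<rho> < M\<close> by (simp add: pos_le_divide_eq mult.commute mult.left_commute)
qed

lemma measure_disjoint_intervals:
  fixes C :: "(real \<times> real) set"
  assumes "finite C" "\<And>i. i \<in> C \<Longrightarrow> fst i \<le> snd i"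
    and disj: "pairwise (\<lambda>i j. disjnt {fst i..snd i} {fst j..snd j}) C"
  shows "measure lebesgue (\<Union>i\<in>C. {fst i..snd i}) = (\<Sum>i\<in>C. snd i - fst i)"
proof -
  have "pairwise (\<lambda>i j. negligible ({fst i..snd i} \<inter> {fst j..snd j})) C"
    using disj by (rule pairwise_mono) (auto simp: disjnt_def)
  then have "measure lebesgue (\<Union>i\<in>C. {fst i..snd i}) = (\<Sum>i\<in>C. measure lebesgue {fst i..snd i})"
    by (intro measure_negligible_finite_Union_image) (use \<open>finite C\<close> in auto)
  also have "\<dots> = (\<Sum>i\<in>C. snd i - fst i)"
    using assms(2) by (intro sum.cong) auto
  finally show ?thesis .
qed

lemma measure_flat_intervals_within_steep:
  fixes g :: "real \<Rightarrow> 'b::real_normed_vector" and C1 C2 :: "(real \<times> real) set"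
  assumes Lip: "\<And>s t. s \<le> t \<Longrightarrow> norm (g t - g s) \<le> M * (t - s)"
    and "\<rho> < M" "\<sigma> \<le> M"
    and steep: "\<And>j. j \<in> C1 \<Longrightarrow>
      fst j < snd j \<and> {fst j..snd j} \<subseteq> U \<and> \<sigma> * (snd j - fst j) \<le> norm (g (snd j) - g (fst j))"
    and disj1: "pairwise (\<lambda>i j. disjnt {fst i..snd i} {fst j..snd j}) C1"
    and flat: "\<And>i. i \<in> C2 \<Longrightarrow> fst i < snd i \<and> norm (g (snd i) - g (fst i)) \<le> \<rho> * (snd i - fst i)"
    and nested: "\<And>i. i \<in> C2 \<Longrightarrow> \<exists>j\<in>C1. {fst i..snd i} \<subseteq> {fst j..snd j}"
    and disj2: "pairwise (\<lambda>i j. disjnt {fst i..snd i} {fst j..snd j}) C2"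
    and "countable C2" "U \<in> lmeasurable"
  shows "(\<Union>i\<in>C2. {fst i..snd i}) \<in> lmeasurable \<and>
    measure lebesgue (\<Union>i\<in>C2. {fst i..snd i}) \<le> (M - \<sigma>) / (M - \<rho>) * measure lebesgue U"
proof -
  define \<theta> where "\<theta> = (M - \<sigma>) / (M - \<rho>)"
  have "0 \<le> \<theta>"
    using \<open>\<rho> < M\<close> \<open>\<sigma> \<le> M\<close> by (simp add: \<theta>_def)
  have finite_bound: "measure lebesgue (\<Union>i\<in>G. {fst i..snd i}) \<le> \<theta> * measure lebesgue U"
    if G: "G \<subseteq> C2" "finite G" for G
  proof -
    obtain J where J: "\<And>i. i \<in> G \<Longrightarrow> J i \<in> C1 \<and> {fst i..snd i} \<subseteq> {fst (J i)..snd (J i)}"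
      using bchoice[of G "\<lambda>i j. j \<in> C1 \<and> {fst i..snd i} \<subseteq> {fst j..snd j}"] nested G(1) by blast
    have JG: "J ` G \<subseteq> C1"
      using J by blast
    have "measure lebesgue (\<Union>i\<in>G. {fst i..snd i}) \<le> (\<Sum>i\<in>G. measure lebesgue {fst i..snd i})"
      using G(2) by (intro measure_UNION_le) auto
    also have "\<dots> = (\<Sum>i\<in>G. snd i - fst i)"
      using G flat by (intro sum.cong) (auto dest!: subsetD less_imp_le)
    also have "\<dots> = (\<Sum>j\<in>J ` G. \<Sum>i\<in>{i\<in>G. J i = j}. snd i - fst i)"
      using G(2) by (rule sum.image_gen)
    also have "\<dots> \<le> (\<Sum>j\<in>J ` G. \<theta> * (snd j - fst j))"
    proof (intro sum_mono)
      fix j assume "j \<in> J ` G"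
      then have "j \<in> C1"
        using JG by blast
      show "(\<Sum>i\<in>{i\<in>G. J i = j}. snd i - fst i) \<le> \<theta> * (snd j - fst j)"
        unfolding \<theta>_def
      proof (rule sum_lengths_flat_within_steep[OF Lip \<open>\<rho> < M\<close>])
        fix i assume "i \<in> {i\<in>G. J i = j}"
        then show "norm (g (snd i) - g (fst i)) \<le> \<rho> * (snd i - fst i)"
          using flat G(1) by blast
      next
        fix i assume "i \<in> {i\<in>G. J i = j}"
        then show "fst i < snd i \<and> {fst i..snd i} \<subseteq> {fst j..snd j}"
          using flat J G(1) by blast
      next
        show "pairwise (\<lambda>i j. disjnt {fst i..snd i} {fst j..snd j}) {i\<in>G. J i = j}"
          by (rule pairwise_subset[OF disj2]) (use G(1) in blast)
      qed (use G(2) steep[OF \<open>j \<in> C1\<close>] in auto)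
    qed
    also have "\<dots> = \<theta> * measure lebesgue (\<Union>j\<in>J ` G. {fst j..snd j})"
      using G(2) JG steep pairwise_subset[OF disj1 JG]
      by (subst measure_disjoint_intervals) (auto simp: sum_distrib_left less_imp_le)
    also have "\<dots> \<le> \<theta> * measure lebesgue U"
    proof (intro mult_left_mono measure_mono_fmeasurable)
      show "(\<Union>j\<in>J ` G. {fst j..snd j}) \<subseteq> U"
        using JG steep by blast
    qed (use G(2) \<open>0 \<le> \<theta>\<close> \<open>U \<in> lmeasurable\<close> in auto)
    finally show ?thesis .
  qed
  show ?thesis
    unfolding \<theta>_def[symmetric]
    using fmeasurable_UN_bound[OF \<open>countable C2\<close> _ finite_bound]
      measure_UN_bound[OF \<open>countable C2\<close> _ finite_bound] by auto
qed

lemma Vitali_covering_intervals: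
  fixes K :: "(real \<times> real) set" and S :: "real set"
  assumes "\<And>i. i \<in> K \<Longrightarrow> fst i < snd i"
    and "\<And>x d. x \<in> S \<Longrightarrow> 0 < d \<Longrightarrow> \<exists>i\<in>K. x \<in> {fst i..snd i} \<and> snd i - fst i < d"
  obtains C where "countable C" "C \<subseteq> K" "pairwise (\<lambda>i j. disjnt {fst i..snd i} {fst j..snd j}) C"
    "negligible (S - (\<Union>i\<in>C. {fst i..snd i}))"
proof -
  have cball_eq: "cball ((fst i + snd i) / 2) ((snd i - fst i) / 2) = {fst i..snd i}" for i :: "real \<times> real"
  proof -
    have "(fst i + snd i) / 2 - (snd i - fst i) / 2 = fst i" "(fst i + snd i) / 2 + (snd i - fst i) / 2 = snd i"
      by (simp_all add: field_simps)
    then show ?thesis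
      by (simp add: cball_eq_atLeastAtMost)
  qed
  obtain C where "countable C" "C \<subseteq> K"
    "pairwise (\<lambda>i j. disjnt {fst i..snd i} {fst j..snd j}) C" "negligible (S - (\<Union>i\<in>C. {fst i..snd i}))"
  proof (rule Vitali_covering_theorem_cballs[of K "\<lambda>i. (snd i - fst i) / 2" S "\<lambda>i. (fst i + snd i) / 2"])
    fix x and d :: real assume "x \<in> S" "0 < d"
    then obtain i where "i \<in> K" "x \<in> {fst i..snd i}" "snd i - fst i < d"
      using assms(2) by blast
    then show "\<exists>i. i \<in> K \<and> x \<in> cball ((fst i + snd i) / 2) ((snd i - fst i) / 2) \<and> (snd i - fst i) / 2 < d"
      unfolding cball_eq using \<open>0 < d\<close> by (intro exI[of _ i]) auto
  qed (use assms(1) in \<open>auto simp: cball_eq\<close>)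
  then show thesis
    using that by blast
qed

lemma frequently_chord_slope_at_0E:
  fixes g :: "real \<Rightarrow> 'b::real_normed_vector"
  assumes "\<exists>\<^sub>F h in at 0. P (chord_slope g t (t + h))" "0 < d"
  obtains l r where "l < r" "t \<in> {l..r}" "{l..r} \<subseteq> ball t d" "r - l < d" "P (chord_slope g l r)"
proof -
  obtain h where h: "h \<noteq> 0" "\<bar>h\<bar> < d" "P (chord_slope g t (t + h))"
    using assms unfolding frequently_at by (auto simp: dist_real_def)
  show thesis
  proof (cases "0 < h")
    case True
    then show thesis
      using h by (intro that[of t "t + h"]) (auto simp: dist_real_def)
  next
    case False
    then show thesis
      using h by (intro that[of "t + h" t]) (auto simp: dist_real_def chord_slope_commute)
  qed
qed

lemma Vitali_cover_by_chord_intervals: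
  fixes g :: "real \<Rightarrow> 'b::real_normed_vector" and \<V> :: "real set set"
  assumes freq: "\<And>t. t \<in> S \<Longrightarrow> \<exists>\<^sub>F h in at 0. P (chord_slope g t (t + h))"
    and cover: "\<And>t. t \<in> S \<Longrightarrow> \<exists>V\<in>\<V>. open V \<and> t \<in> V"
  obtains C where "countable C" "pairwise (\<lambda>i j. disjnt {fst i..snd i} {fst j..snd j}) C"
    "\<And>i. i \<in> C \<Longrightarrow> fst i < snd i \<and> P (chord_slope g (fst i) (snd i)) \<and> (\<exists>V\<in>\<V>. {fst i..snd i} \<subseteq> V)"
    "negligible (S - (\<Union>i\<in>C. {fst i..snd i}))"
proof -
  define K where "K = {i. fst i < snd i \<and> P (chord_slope g (fst i) (snd i)) \<and> (\<exists>V\<in>\<V>. {fst i..snd i} \<subseteq> V)}"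
  obtain C where "countable C" "C \<subseteq> K" "pairwise (\<lambda>i j. disjnt {fst i..snd i} {fst j..snd j}) C"
    "negligible (S - (\<Union>i\<in>C. {fst i..snd i}))"
  proof (rule Vitali_covering_intervals[of K S])
    fix x and d :: real assume "x \<in> S" "0 < d"
    obtain V e where "V \<in> \<V>" "0 < e" "ball x e \<subseteq> V"
      using cover[OF \<open>x \<in> S\<close>] by (meson openE)
    have "0 < min d e"
      using \<open>0 < d\<close> \<open>0 < e\<close> by simp
    then obtain l r where "l < r" "x \<in> {l..r}" "{l..r} \<subseteq> ball x (min d e)" "r - l < min d e"
      "P (chord_slope g l r)"
      by (rule frequently_chord_slope_at_0E[OF freq[OF \<open>x \<in> S\<close>]])
    moreover have "{l..r} \<subseteq> V"
      using \<open>{l..r} \<subseteq> ball x (min d e)\<close> \<open>ball x e \<subseteq> V\<close>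
      by (meson min.cobounded2 subset_ball order_trans)
    ultimately show "\<exists>i\<in>K. x \<in> {fst i..snd i} \<and> snd i - fst i < d"
      using \<open>V \<in> \<V>\<close> by (intro bexI[of _ "(l, r)"]) (auto simp: K_def)
  qed (auto simp: K_def)
  then show thesis
    by (intro that) (auto simp: K_def)
qed

lemma negligible_rest_of_nested_interval_covers:
  fixes C1 C2 :: "(real \<times> real) set"
  assumes "negligible (E - (\<Union>j\<in>C1. {fst j..snd j}))"
    and "negligible (E \<inter> (\<Union>j\<in>C1. {fst j<..<snd j}) - (\<Union>i\<in>C2. {fst i..snd i}))"
    and "countable C1"
  shows "negligible (E - (\<Union>i\<in>C2. {fst i..snd i}))"
proof -
  have "negligible (\<Union>j\<in>C1. {fst j, snd j})"
    using \<open>countable C1\<close> by (intro negligible_countable_Union) auto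
  with assms(1,2) have "negligible ((E - (\<Union>j\<in>C1. {fst j..snd j})) \<union>
      (E \<inter> (\<Union>j\<in>C1. {fst j<..<snd j}) - (\<Union>i\<in>C2. {fst i..snd i})) \<union> (\<Union>j\<in>C1. {fst j, snd j}))"
    by (intro negligible_Un)
  moreover have "E - (\<Union>i\<in>C2. {fst i..snd i}) \<subseteq> (E - (\<Union>j\<in>C1. {fst j..snd j})) \<union>
      (E \<inter> (\<Union>j\<in>C1. {fst j<..<snd j}) - (\<Union>i\<in>C2. {fst i..snd i})) \<union> (\<Union>j\<in>C1. {fst j, snd j})"
    by fastforce
  ultimately show ?thesis
    by (rule negligible_subset)
qed

lemma oscillation_set_measure_contracts:
  fixes g :: "real \<Rightarrow> 'b::real_normed_vector"
  assumes Lip: "\<And>s t. s \<le> t \<Longrightarrow> norm (g t - g s) \<le> M * (t - s)"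
    and "\<rho> < \<sigma>" "\<sigma> \<le> M"
    and near: "\<And>t. t \<in> E \<Longrightarrow> \<exists>\<^sub>F h in at 0. norm (chord_slope g t (t + h)) < \<rho>"
    and far: "\<And>t. t \<in> E \<Longrightarrow> \<exists>\<^sub>F h in at 0. \<sigma> < norm (chord_slope g t (t + h))"
    and U: "open U" "E \<subseteq> U" "U \<in> lmeasurable"
  obtains T where "E \<subseteq> T" "T \<in> lmeasurable" "measure lebesgue T \<le> (M - \<sigma>) / (M - \<rho>) * measure lebesgue U"
proof -
  \<comment> \<open>Steep intervals cover E inside U, flat intervals cover E again inside the steep ones; a steep
    interval has only the fraction (M - \<sigma>)/(M - \<rho>) of its length available for flat subintervals.\<close>
  obtain C1 where "countable C1" and disj1: "pairwise (\<lambda>i j. disjnt {fst i..snd i} {fst j..snd j}) C1"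
    and steep: "\<And>j. j \<in> C1 \<Longrightarrow> fst j < snd j \<and> \<sigma> < norm (chord_slope g (fst j) (snd j)) \<and>
      (\<exists>V\<in>{U}. {fst j..snd j} \<subseteq> V)"
    and E_C1: "negligible (E - (\<Union>j\<in>C1. {fst j..snd j}))"
    by (rule Vitali_cover_by_chord_intervals[where g = g and S = E and P = "\<lambda>q. \<sigma> < norm q" and \<V> = "{U}"])
      (use far U in auto)
  define S2 where "S2 = E \<inter> (\<Union>j\<in>C1. {fst j<..<snd j})"
  obtain C2 where "countable C2" and disj2: "pairwise (\<lambda>i j. disjnt {fst i..snd i} {fst j..snd j}) C2"
    and flat: "\<And>i. i \<in> C2 \<Longrightarrow> fst i < snd i \<and> norm (chord_slope g (fst i) (snd i)) < \<rho> \<and>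
      (\<exists>V\<in>(\<lambda>j. {fst j<..<snd j}) ` C1. {fst i..snd i} \<subseteq> V)"
    and S2_C2: "negligible (S2 - (\<Union>i\<in>C2. {fst i..snd i}))"
    by (rule Vitali_cover_by_chord_intervals[where g = g and S = S2 and P = "\<lambda>q. norm q < \<rho>"
      and \<V> = "(\<lambda>j. {fst j<..<snd j}) ` C1"])
      (use near in \<open>auto simp: S2_def\<close>)
  define A where "A = (\<Union>i\<in>C2. {fst i..snd i})"
  have null: "negligible (E - A)"
    using E_C1 S2_C2 \<open>countable C1\<close> unfolding S2_def A_def by (rule negligible_rest_of_nested_interval_covers)
  have A: "A \<in> lmeasurable \<and>
      measure lebesgue A \<le> (M - \<sigma>) / (M - \<rho>) * measure lebesgue U"
    unfolding A_def
  proof (rule measure_flat_intervals_within_steep[OF Lip _ \<open>\<sigma> \<le> M\<close> _ disj1 _ _ disj2 \<open>countable C2\<close> U(3)])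
    fix j assume "j \<in> C1"
    then show "fst j < snd j \<and> {fst j..snd j} \<subseteq> U \<and> \<sigma> * (snd j - fst j) \<le> norm (g (snd j) - g (fst j))"
      using steep[OF \<open>j \<in> C1\<close>] by (auto simp: norm_diff_eq_chord_slope less_imp_le)
  next
    fix i assume "i \<in> C2"
    then show "fst i < snd i \<and> norm (g (snd i) - g (fst i)) \<le> \<rho> * (snd i - fst i)"
      using flat[OF \<open>i \<in> C2\<close>] by (auto simp: norm_diff_eq_chord_slope less_imp_le)
    obtain j where "j \<in> C1" "{fst i..snd i} \<subseteq> {fst j<..<snd j}"
      using flat[OF \<open>i \<in> C2\<close>] by blast
    then show "\<exists>j\<in>C1. {fst i..snd i} \<subseteq> {fst j..snd j}"
      using greaterThanLessThan_subseteq_atLeastAtMost_iff by blast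
  qed (use \<open>\<rho> < \<sigma>\<close> \<open>\<sigma> \<le> M\<close> in auto)
  show thesis
  proof (rule that[of "A \<union> (E - A)"])
    show "A \<union> (E - A) \<in> lmeasurable"
      using A negligible_imp_measurable[OF null] by (intro fmeasurable.Un) auto
    show "measure lebesgue (A \<union> (E - A)) \<le> (M - \<sigma>) / (M - \<rho>) * measure lebesgue U"
      using A null by (subst measure_Un_null_set) (auto simp: negligible_iff_null_sets)
  qed blast
qed

lemma lmeasurable_outer_openE:
  assumes "T \<in> lmeasurable" "0 < e"
  obtains V where "open V" "T \<subseteq> V" "V \<in> lmeasurable" "measure lebesgue V < measure lebesgue T + e"
proof -
  obtain V where V: "open V" "T \<subseteq> V" "V - T \<in> lmeasurable" "emeasure lebesgue (V - T) < ennreal e"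
    using sets_lebesgue_outer_open[of T e] assms by blast
  have V_eq: "V = T \<union> (V - T)"
    using V(2) by blast
  have "V \<in> lmeasurable"
    using assms(1) V(3) V_eq by (metis fmeasurable.Un)
  moreover have "measure lebesgue V \<le> measure lebesgue T + measure lebesgue (V - T)"
    using assms(1) V(3) by (subst V_eq) (intro measure_Un_le fmeasurableD)
  moreover have "measure lebesgue (V - T) < e"
    using V(3,4) \<open>0 < e\<close> by (simp add: emeasure_eq_measure2 ennreal_less_iff)
  ultimately show thesis
    using V(1,2) that by force
qed

lemma negligible_if_measure_contracts:
  fixes E :: "'a::euclidean_space set"
  assumes "bounded E" "0 \<le> \<theta>" "\<theta> < 1"
    and contract: "\<And>U. open U \<Longrightarrow> E \<subseteq> U \<Longrightarrow> U \<in> lmeasurable \<Longrightarrow>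
      \<exists>T. E \<subseteq> T \<and> T \<in> lmeasurable \<and> measure lebesgue T \<le> \<theta> * measure lebesgue U"
  shows "negligible E"
proof -
  \<comment> \<open>m is the outer measure of E; the hypothesis yields m \<le> \<theta> * m.\<close>
  define \<U> where "\<U> = {U. open U \<and> E \<subseteq> U \<and> U \<in> lmeasurable}"
  define m where "m = (INF U\<in>\<U>. measure lebesgue U)"
  obtain R where "E \<subseteq> ball 0 R"
    using \<open>bounded E\<close> bounded_subset_ballD by blast
  then have "\<U> \<noteq> {}"
    by (auto simp: \<U>_def)
  have bdd: "bdd_below (measure lebesgue ` \<U>)"
    by (rule bdd_belowI2[of _ 0]) simp
  have almost_optimal: "\<exists>U\<in>\<U>. measure lebesgue U < m + e" if "0 < e" for e
    using cINF_less_iff[OF \<open>\<U> \<noteq> {}\<close> bdd, of "m + e"] that by (auto simp: m_def)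
  have key: "m \<le> \<theta> * m + (\<theta> + 1) * e" if "0 < e" for e
  proof -
    obtain U where "U \<in> \<U>" "measure lebesgue U < m + e"
      using almost_optimal \<open>0 < e\<close> by blast
    then obtain T where T: "E \<subseteq> T" "T \<in> lmeasurable" "measure lebesgue T \<le> \<theta> * measure lebesgue U"
      using contract unfolding \<U>_def by blast
    obtain V where V: "open V" "T \<subseteq> V" "V \<in> lmeasurable" "measure lebesgue V < measure lebesgue T + e"
      using lmeasurable_outer_openE[OF T(2) \<open>0 < e\<close>] by blast
    have "m \<le> measure lebesgue V"
      unfolding m_def using V T(1) by (intro cINF_lower[OF bdd]) (auto simp: \<U>_def)
    moreover have "\<theta> * measure lebesgue U \<le> \<theta> * (m + e)"
      using \<open>measure lebesgue U < m + e\<close> \<open>0 \<le> \<theta>\<close> by (simp add: mult_left_mono)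
    ultimately show ?thesis
      using T(3) V(4) by (simp add: algebra_simps)
  qed
  have "m \<le> \<theta> * m"
  proof (rule field_le_epsilon)
    fix e :: real assume "0 < e"
    then show "m \<le> \<theta> * m + e"
      using key[of "e / (\<theta> + 1)"] \<open>0 \<le> \<theta>\<close> by simp
  qed
  then have "m \<le> 0"
    using \<open>\<theta> < 1\<close> by (simp add: mult_le_cancel_right1)
  show ?thesis
    unfolding negligible_outer
  proof (intro allI impI)
    fix e :: real assume "0 < e"
    then obtain U where "U \<in> \<U>" "measure lebesgue U < m + e"
      using almost_optimal by blast
    then show "\<exists>T. E \<subseteq> T \<and> T \<in> lmeasurable \<and> measure lebesgue T < e"
      using \<open>m \<le> 0\<close> by (auto simp: \<U>_def)
  qed
qed

lemma negligible_oscillation_set: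
  fixes g :: "real \<Rightarrow> 'b::real_normed_vector"
  assumes Lip: "\<And>s t. s \<le> t \<Longrightarrow> norm (g t - g s) \<le> M * (t - s)"
    and "\<rho> < \<sigma>"
    and near: "\<And>t. t \<in> E \<Longrightarrow> \<exists>\<^sub>F h in at 0. norm (chord_slope g t (t + h)) < \<rho>"
    and far: "\<And>t. t \<in> E \<Longrightarrow> \<exists>\<^sub>F h in at 0. \<sigma> < norm (chord_slope g t (t + h))"
  shows "negligible E"
proof (cases "\<sigma> \<le> M")
  case False
  have "t \<notin> E" for t
  proof
    assume "t \<in> E"
    obtain l r where "l < r" "t \<in> {l..r}" "{l..r} \<subseteq> ball t 1" "r - l < 1" "\<sigma> < norm (chord_slope g l r)"
      by (rule frequently_chord_slope_at_0E[OF far[OF \<open>t \<in> E\<close>] zero_less_one])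
    moreover have "(r - l) * norm (chord_slope g l r) \<le> (r - l) * M"
      using Lip[of l r] \<open>l < r\<close> by (simp add: norm_diff_eq_chord_slope mult.commute)
    ultimately show False
      using False by (simp add: mult_le_cancel_left_pos)
  qed
  then have "E = {}"
    by blast
  then show ?thesis
    by simp
next
  case True
  show ?thesis
  proof (rule negligible_on_intervals[THEN iffD2], intro allI)
    fix a b :: real
    have "negligible (E \<inter> {a..b})"
    proof (rule negligible_if_measure_contracts)
      show "bounded (E \<inter> {a..b})"
        by (simp add: bounded_Int)
      show "0 \<le> (M - \<sigma>) / (M - \<rho>)" "(M - \<sigma>) / (M - \<rho>) < 1"
        using True \<open>\<rho> < \<sigma>\<close> by auto
      fix U assume "open U" "E \<inter> {a..b} \<subseteq> U" "U \<in> lmeasurable"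
      then obtain T where "E \<inter> {a..b} \<subseteq> T" "T \<in> lmeasurable"
        "measure lebesgue T \<le> (M - \<sigma>) / (M - \<rho>) * measure lebesgue U"
        using oscillation_set_measure_contracts[OF Lip \<open>\<rho> < \<sigma>\<close> True, of "E \<inter> {a..b}" U] near far
        by blast
      then show "\<exists>T. E \<inter> {a..b} \<subseteq> T \<and> T \<in> lmeasurable \<and>
          measure lebesgue T \<le> (M - \<sigma>) / (M - \<rho>) * measure lebesgue U"
        by blast
    qed
    then show "negligible (E \<inter> cbox a b)"
      by simp
  qed
qed

lemma compact_countable_dense_subsetE:
  fixes K :: "'a::metric_space set"
  assumes "compact K"
  obtains D where "countable D" "\<And>z e. z \<in> K \<Longrightarrow> 0 < e \<Longrightarrow> \<exists>y\<in>D. dist z y < e"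
proof -
  have "\<forall>n::nat. \<exists>F. finite F \<and> F \<subseteq> K \<and> K \<subseteq> (\<Union>x\<in>F. ball x (1 / Suc n))"
    using seq_compact_imp_totally_bounded[OF compact_imp_seq_compact[OF assms]] by simp
  then obtain F where F: "\<And>n. finite (F n) \<and> K \<subseteq> (\<Union>x\<in>F n. ball x (1 / Suc n))"
    by metis
  show thesis
  proof (rule that[of "\<Union>n. F n"])
    show "countable (\<Union>n. F n)"
      using F by (simp add: countable_finite)
    fix z and e :: real assume "z \<in> K" "0 < e"
    obtain n where "1 / Suc n < e"
      using nat_approx_posE[OF \<open>0 < e\<close>] by metis
    moreover have "z \<in> (\<Union>x\<in>F n. ball x (1 / Suc n))"
      using F \<open>z \<in> K\<close> by blast
    then obtain y where "y \<in> F n" "dist y z < 1 / Suc n"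
      by auto
    ultimately show "\<exists>y\<in>\<Union>n. F n. dist z y < e"
      by (intro bexI[of _ y]) (auto simp: dist_commute)
  qed
qed

lemma compact_frequently_nearE:
  fixes f :: "'a \<Rightarrow> 'b::metric_space"
  assumes "compact K" "F \<noteq> bot" "eventually (\<lambda>x. f x \<in> K) F"
  obtains z where "z \<in> K" "\<And>e. 0 < e \<Longrightarrow> \<exists>\<^sub>F x in F. dist (f x) z < e"
proof -
  obtain z where "z \<in> K" and nontrivial: "inf (nhds z) (filtermap f F) \<noteq> bot"
  proof -
    have "filtermap f F \<noteq> bot" "eventually (\<lambda>y. y \<in> K) (filtermap f F)"
      using assms(2,3) by (simp_all add: filtermap_bot_iff eventually_filtermap)
    then show thesis
      using \<open>compact K\<close> that unfolding compact_filter by blast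
  qed
  have "\<exists>\<^sub>F x in F. dist (f x) z < e" if "0 < e" for e
  proof (rule ccontr)
    assume "\<not> (\<exists>\<^sub>F x in F. dist (f x) z < e)"
    then have "eventually (\<lambda>y. \<not> dist y z < e) (filtermap f F)"
      by (simp add: not_frequently eventually_filtermap)
    moreover have "eventually (\<lambda>y. dist y z < e) (nhds z)"
      using that by (auto simp: eventually_nhds_metric)
    ultimately have "eventually (\<lambda>_. False) (inf (nhds z) (filtermap f F))"
      unfolding eventually_inf by blast
    with nontrivial show False
      by (simp add: eventually_False)
  qed
  with \<open>z \<in> K\<close> show thesis
    using that by blast
qed

lemma negligible_oscillation_set_around:
  fixes g :: "real \<Rightarrow> 'b::real_normed_vector"
  assumes bounded: "\<And>s t. s \<noteq> t \<Longrightarrow> norm (chord_slope g s t) \<le> B" and "\<rho> < \<sigma>"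
  shows "negligible {t. (\<exists>\<^sub>F h in at 0. norm (chord_slope g t (t + h) - y) < \<rho>) \<and>
    (\<exists>\<^sub>F h in at 0. \<sigma> < norm (chord_slope g t (t + h) - y))}"
proof -
  define g' where "g' s = g s - s *\<^sub>R y" for s
  have shift: "chord_slope g' s t = chord_slope g s t - y" if "s \<noteq> t" for s t
  proof -
    have "g' t - g' s = (g t - g s) - (t - s) *\<^sub>R y"
      by (simp add: g'_def algebra_simps)
    then show ?thesis
      using that by (simp add: chord_slope_def scaleR_diff_right)
  qed
  have shift_at_0: "\<forall>\<^sub>F h in at 0. chord_slope g' t (t + h) = chord_slope g t (t + h) - y" for t
    by (auto simp: eventually_at_filter shift)
  show ?thesis
  proof (rule negligible_oscillation_set[of g' "B + norm y" \<rho> \<sigma>])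
    fix s t :: real assume "s \<le> t"
    show "norm (g' t - g' s) \<le> (B + norm y) * (t - s)"
    proof (cases "s = t")
      case False
      then have "norm (chord_slope g' s t) \<le> B + norm y"
        using bounded[OF False] by (simp add: shift[OF False] norm_triangle_le_diff)
      then show ?thesis
        using \<open>s \<le> t\<close> False by (simp add: norm_diff_eq_chord_slope mult.commute mult_left_mono)
    qed simp
  next
    fix t
    assume "t \<in> {t. (\<exists>\<^sub>F h in at 0. norm (chord_slope g t (t + h) - y) < \<rho>) \<and>
      (\<exists>\<^sub>F h in at 0. \<sigma> < norm (chord_slope g t (t + h) - y))}"
    then have near: "\<exists>\<^sub>F h in at 0. norm (chord_slope g t (t + h) - y) < \<rho>"
      and far: "\<exists>\<^sub>F h in at 0. \<sigma> < norm (chord_slope g t (t + h) - y)"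
      by simp_all
    show "\<exists>\<^sub>F h in at 0. norm (chord_slope g' t (t + h)) < \<rho>"
      using frequently_eventually_frequently[OF near shift_at_0[of t]] by (rule frequently_elim1) simp
    show "\<exists>\<^sub>F h in at 0. \<sigma> < norm (chord_slope g' t (t + h))"
      using frequently_eventually_frequently[OF far shift_at_0[of t]] by (rule frequently_elim1) simp
  qed (fact \<open>\<rho> < \<sigma>\<close>)
qed

lemma not_convergent_oscillatesE:
  fixes q :: "'a \<Rightarrow> 'b::real_normed_vector"
  assumes "compact K" "F \<noteq> bot" "\<forall>\<^sub>F x in F. q x \<in> K" "\<nexists>z. (q \<longlongrightarrow> z) F"
    and dense: "\<And>z e. z \<in> K \<Longrightarrow> 0 < e \<Longrightarrow> \<exists>y\<in>D. dist z y < e"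
  obtains y and n :: nat where "y \<in> D"
    "\<exists>\<^sub>F x in F. norm (q x - y) < 1 / Suc n" "\<exists>\<^sub>F x in F. 2 / Suc n < norm (q x - y)"
proof -
  obtain z where "z \<in> K" and cluster: "\<And>e. 0 < e \<Longrightarrow> \<exists>\<^sub>F x in F. dist (q x) z < e"
    using compact_frequently_nearE[OF assms(1-3)] by blast
  obtain \<epsilon> where "0 < \<epsilon>" and away: "\<exists>\<^sub>F x in F. \<epsilon> \<le> dist (q x) z"
    using \<open>\<nexists>z. (q \<longlongrightarrow> z) F\<close> unfolding tendsto_iff by (auto simp: not_eventually not_less)
  obtain n :: nat where n: "1 / Suc n < \<epsilon> / 3"
    using nat_approx_posE[of "\<epsilon> / 3"] \<open>0 < \<epsilon>\<close> by auto
  obtain y where "y \<in> D" and y: "dist z y < 1 / Suc n"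
    using dense[OF \<open>z \<in> K\<close>, of "1 / Suc n"] by auto
  have "0 < 1 / Suc n - dist z y"
    using y by simp
  then have "\<exists>\<^sub>F x in F. dist (q x) z < 1 / Suc n - dist z y"
    by (rule cluster)
  then have "\<exists>\<^sub>F x in F. norm (q x - y) < 1 / Suc n"
  proof (rule frequently_elim1)
    fix x assume "dist (q x) z < 1 / Suc n - dist z y"
    then show "norm (q x - y) < 1 / Suc n"
      using dist_triangle[of "q x" y z] by (simp add: dist_norm)
  qed
  moreover have "\<exists>\<^sub>F x in F. 2 / Suc n < norm (q x - y)"
    using away
  proof (rule frequently_elim1)
    fix x assume "\<epsilon> \<le> dist (q x) z"
    then show "2 / Suc n < norm (q x - y)"
      using dist_triangle2[of "q x" z y] n y by (simp add: dist_norm)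
  qed
  ultimately show thesis
    using \<open>y \<in> D\<close> that by blast
qed

lemma negligible_nonconvergent_chord_slopes:
  fixes g :: "real \<Rightarrow> 'b::real_normed_vector"
  assumes "compact K" and slope_in: "\<And>s t. s \<noteq> t \<Longrightarrow> chord_slope g s t \<in> K"
  shows "negligible {t. \<nexists>z. ((\<lambda>h. chord_slope g t (t + h)) \<longlongrightarrow> z) (at 0)}"
proof -
  obtain B where B: "\<And>k. k \<in> K \<Longrightarrow> norm k \<le> B"
    using compact_imp_bounded[OF \<open>compact K\<close>] unfolding bounded_iff by blast
  obtain D where "countable D" and dense: "\<And>z e. z \<in> K \<Longrightarrow> 0 < e \<Longrightarrow> \<exists>y\<in>D. dist z y < e"
    using compact_countable_dense_subsetE[OF \<open>compact K\<close>] by blast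
  define Osc where "Osc y n = {t.
      (\<exists>\<^sub>F h in at 0. norm (chord_slope g t (t + h) - y) < 1 / Suc n) \<and>
      (\<exists>\<^sub>F h in at 0. 2 / Suc n < norm (chord_slope g t (t + h) - y))}" for y and n :: nat
  have "negligible (Osc y n)" for y n
    unfolding Osc_def using B slope_in
    by (intro negligible_oscillation_set_around[where B = B]) (auto simp: divide_strict_right_mono)
  then have "negligible (\<Union>y\<in>D. \<Union>n. Osc y n)"
    using \<open>countable D\<close> by (intro negligible_countable_Union) auto
  moreover have "{t. \<nexists>z. ((\<lambda>h. chord_slope g t (t + h)) \<longlongrightarrow> z) (at 0)} \<subseteq> (\<Union>y\<in>D. \<Union>n. Osc y n)"
  proof
    fix t assume "t \<in> {t. \<nexists>z. ((\<lambda>h. chord_slope g t (t + h)) \<longlongrightarrow> z) (at 0)}"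
    then have nonconvergent: "\<nexists>z. ((\<lambda>h. chord_slope g t (t + h)) \<longlongrightarrow> z) (at 0)"
      by simp
    have "\<forall>\<^sub>F h in at 0. chord_slope g t (t + h) \<in> K"
      by (auto simp: eventually_at_filter slope_in)
    then obtain y n where "y \<in> D" "t \<in> Osc y n"
      unfolding Osc_def
      by (rule not_convergent_oscillatesE[OF \<open>compact K\<close> at_neq_bot _ nonconvergent dense]) auto
    then show "t \<in> (\<Union>y\<in>D. \<Union>n. Osc y n)"
      by blast
  qed
  ultimately show ?thesis
    by (rule negligible_subset)
qed

lemma lipnorm_ge_quotient:
  assumes "f \<in> Lip0" "x \<noteq> y"
  shows "norm (f x - f y) / norm (x - y) \<le> lipnorm f"
proof -
  have "(\<lambda>p. norm (f (fst p) - f (snd p)) / norm (fst p - snd p)) ` {(x, y). x \<noteq> y} =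
      {norm (f x - f y) / norm (x - y) | x y. x \<noteq> y}"
    by force
  then have "bdd_above ((\<lambda>p. norm (f (fst p) - f (snd p)) / norm (fst p - snd p)) ` {(x, y). x \<noteq> y})"
    using \<open>f \<in> Lip0\<close> by (simp add: Lip0_def)
  then show ?thesis
    using \<open>x \<noteq> y\<close> unfolding lipnorm_def by (auto intro!: cSUP_upper2[where x="(x, y)"])
qed

lemma Lip0_norm_diff_le:
  assumes "f \<in> Lip0"
  shows "norm (f x - f y) \<le> lipnorm f * norm (x - y)"
proof (cases "x = y")
  case False
  then show ?thesis
    using lipnorm_ge_quotient[OF assms False] by (simp add: divide_le_eq)
qed simp

lemma lipnorm_le:
  assumes "\<exists>a::'a::real_normed_vector. a \<noteq> 0"
    and "\<And>x y::'a. x \<noteq> y \<Longrightarrow> norm (f x - f y) / norm (x - y) \<le> c"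
  shows "lipnorm f \<le> c"
proof -
  have "{(x, y). x \<noteq> (y::'a)} \<noteq> {}"
    using assms(1) by auto
  then show ?thesis
    unfolding lipnorm_def by (rule cSUP_least) (use assms(2) in auto)
qed

lemma slopesI: "x \<noteq> y \<Longrightarrow> (f x - f y) /\<^sub>R norm (x - y) \<in> slopes f"
  unfolding slopes_def by blast

lemma Lipschitz_extremal_on_subinterval:
  fixes g :: "real \<Rightarrow> 'b::real_normed_vector"
  assumes Lip: "\<And>s t. norm (g t - g s) \<le> L * \<bar>t - s\<bar>"
    and extremal: "norm (g b - g a) = L * (b - a)"
    and "a \<le> s" "s \<le> t" "t \<le> b"
  shows "norm (g t - g s) = L * (t - s)"
proof -
  have "norm (g b - g a) \<le> norm (g s - g a) + norm (g t - g s) + norm (g b - g t)"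
    by (rule norm_diff_le_three_steps)
  moreover have "norm (g s - g a) \<le> L * (s - a)" "norm (g b - g t) \<le> L * (b - t)"
    using Lip[of s a] Lip[of b t] \<open>a \<le> s\<close> \<open>t \<le> b\<close> by simp_all
  moreover have "norm (g t - g s) \<le> L * (t - s)"
    using Lip[of t s] \<open>s \<le> t\<close> by simp
  ultimately show ?thesis
    using extremal by (simp add: algebra_simps)
qed

lemma extremal_Lipschitz_curve_has_extremal_derivative:
  fixes g :: "real \<Rightarrow> 'b::real_normed_vector"
  assumes Lip: "\<And>s t. norm (g t - g s) \<le> L * \<bar>t - s\<bar>"
    and extremal: "norm (g d - g 0) = L * d" and "0 < d"
    and "compact K" and slope_in: "\<And>s t. s \<noteq> t \<Longrightarrow> chord_slope g s t \<in> K"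
  obtains t z where "((\<lambda>h. chord_slope g t (t + h)) \<longlongrightarrow> z) (at 0)" "norm z = L"
proof -
  have "negligible {t. \<nexists>z. ((\<lambda>h. chord_slope g t (t + h)) \<longlongrightarrow> z) (at 0)}"
    by (rule negligible_nonconvergent_chord_slopes[OF \<open>compact K\<close> slope_in])
  moreover have "\<not> negligible {0<..<d}"
    using \<open>0 < d\<close> negligible_interval(2)[of 0 d] by simp
  ultimately have "\<not> {0<..<d} \<subseteq> {t. \<nexists>z. ((\<lambda>h. chord_slope g t (t + h)) \<longlongrightarrow> z) (at 0)}"
    using negligible_subset by blast
  then obtain t z where t: "0 < t" "t < d" and z: "((\<lambda>h. chord_slope g t (t + h)) \<longlongrightarrow> z) (at 0)"
    by auto
  have "\<forall>\<^sub>F h in at_right 0. norm (chord_slope g t (t + h)) = L"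
    unfolding eventually_at_right_field
  proof (intro exI conjI allI impI)
    show "0 < d - t"
      using t by simp
    fix h :: real assume "0 < h" "h < d - t"
    then have "norm (g (t + h) - g t) = L * h"
      using Lipschitz_extremal_on_subinterval[OF Lip, of d 0 t "t + h"] extremal t by simp
    then show "norm (chord_slope g t (t + h)) = L"
      using \<open>0 < h\<close> by (simp add: chord_slope_def)
  qed
  moreover have "((\<lambda>h. norm (chord_slope g t (t + h))) \<longlongrightarrow> norm z) (at_right 0)"
    using tendsto_mono[OF at_le[OF subset_UNIV] tendsto_norm[OF z]] .
  ultimately have "norm z = L"
    using tendsto_const_iff[of "at_right (0::real)" L "norm z"] tendsto_cong by fastforce
  with z show thesis
    by (rule that)
qed

lemma SA_compact_slopes_imp_Dset:
  fixes f :: "'a::real_normed_vector \<Rightarrow> 'b::real_normed_vector"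
  assumes "f \<in> SA" and "compact (closure (slopes f))"
  shows "f \<in> Dset"
proof -
  obtain x y where "f \<in> Lip0" "x \<noteq> y" and attained: "norm (f x - f y) = lipnorm f * norm (x - y)"
    using \<open>f \<in> SA\<close> unfolding SA_def by blast
  define d where "d = norm (x - y)"
  define e where "e = (x - y) /\<^sub>R d"
  define g where "g s = f (y + s *\<^sub>R e)" for s
  have "0 < d" "norm e = 1"
    using \<open>x \<noteq> y\<close> by (simp_all add: d_def e_def)
  then have "e \<noteq> 0"
    by auto
  have segment: "norm ((y + t *\<^sub>R e) - (y + s *\<^sub>R e)) = \<bar>t - s\<bar>" for s t
    using \<open>norm e = 1\<close> by (simp add: scaleR_diff_left[symmetric])
  have Lip: "norm (g t - g s) \<le> lipnorm f * \<bar>t - s\<bar>" for s t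
    using Lip0_norm_diff_le[OF \<open>f \<in> Lip0\<close>, of "y + t *\<^sub>R e" "y + s *\<^sub>R e"]
    unfolding segment g_def .
  have extremal: "norm (g d - g 0) = lipnorm f * d"
    using attained \<open>0 < d\<close> by (simp add: g_def e_def d_def)
  have "chord_slope g s t \<in> slopes f" if "s < t" for s t
    using slopesI[of "y + t *\<^sub>R e" "y + s *\<^sub>R e" f] that \<open>e \<noteq> 0\<close>
    unfolding segment by (simp add: chord_slope_def g_def)
  then have "chord_slope g s t \<in> closure (slopes f)" if "s \<noteq> t" for s t
    using that closure_subset chord_slope_commute[of g s t] by (metis linorder_neqE_linordered_idom subsetD)
  then obtain t z where z: "((\<lambda>h. chord_slope g t (t + h)) \<longlongrightarrow> z) (at 0)" "norm z = lipnorm f"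
    by (rule extremal_Lipschitz_curve_has_extremal_derivative[OF Lip extremal \<open>0 < d\<close>
      \<open>compact (closure (slopes f))\<close>])
  have "(\<lambda>h. (f (y + t *\<^sub>R e + h *\<^sub>R e) - f (y + t *\<^sub>R e)) /\<^sub>R h) = (\<lambda>h. chord_slope g t (t + h))"
    by (simp add: chord_slope_def g_def scaleR_add_left add.assoc)
  with z(1) have "((\<lambda>h. (f (y + t *\<^sub>R e + h *\<^sub>R e) - f (y + t *\<^sub>R e)) /\<^sub>R h) \<longlongrightarrow> z) (at 0)"
    by simp
  then show ?thesis
    using \<open>f \<in> Lip0\<close> \<open>norm e = 1\<close> z(2) unfolding Dset_def by blast
qed

lemma Dset_subset_LDA: "Dset \<subseteq> LDA"
proof
  fix f :: "'a::real_normed_vector \<Rightarrow> 'b::real_normed_vector"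
  assume "f \<in> Dset"
  then obtain x e z where "f \<in> Lip0" "norm e = 1" "norm z = lipnorm f"
    and lim: "((\<lambda>t. (f (x + t *\<^sub>R e) - f x) /\<^sub>R t) \<longlongrightarrow> z) (at 0)"
    unfolding Dset_def by blast
  define \<tau> where "\<tau> n = inverse (real (Suc n))" for n
  define xs where "xs n = x + \<tau> n *\<^sub>R e" for n
  have "0 < \<tau> n" for n
    by (simp add: \<tau>_def)
  have norm_xs: "norm (xs n - x) = \<tau> n" for n
    using \<open>0 < \<tau> n\<close> \<open>norm e = 1\<close> by (simp add: xs_def)
  have "xs n \<noteq> x" for n
    using norm_xs[of n] \<open>0 < \<tau> n\<close> by auto
  have "\<tau> \<longlonglongrightarrow> 0"
    unfolding \<tau>_def by (rule LIMSEQ_inverse_real_of_nat)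
  then have "filterlim \<tau> (at 0) sequentially"
    using \<open>\<And>n. 0 < \<tau> n\<close> by (simp add: filterlim_at less_imp_neq[symmetric])
  then have "(\<lambda>n. (f (xs n) - f x) /\<^sub>R norm (xs n - x)) \<longlonglongrightarrow> z"
    unfolding norm_xs unfolding xs_def by (rule filterlim_compose[OF lim])
  moreover have "(xs n - x) /\<^sub>R norm (xs n - x) = e" for n
    unfolding norm_xs using \<open>0 < \<tau> n\<close> by (simp add: xs_def)
  then have "(\<lambda>n. (xs n - x) /\<^sub>R norm (xs n - x)) \<longlonglongrightarrow> e"
    by simp
  moreover have "xs \<longlonglongrightarrow> x"
    using tendsto_add[OF tendsto_const tendsto_scaleR[OF \<open>\<tau> \<longlonglongrightarrow> 0\<close> tendsto_const], of x e]
    unfolding xs_def[abs_def] by simp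
  ultimately show "f \<in> LDA"
    using \<open>f \<in> Lip0\<close> \<open>norm e = 1\<close> \<open>norm z = lipnorm f\<close> \<open>\<And>n. xs n \<noteq> x\<close>
    unfolding LDA_def by (intro CollectI conjI exI[of _ z] exI[of _ e] exI[of _ x] exI[of _ xs] exI[of _ "\<lambda>_. x"]) auto
qed

lemma LDA_subset_DA: "LDA \<subseteq> DA"
  unfolding LDA_def DA_def by blast

lemma DA_subset_Aset: "DA \<subseteq> Aset"
  unfolding DA_def Aset_def by blast

lemma closure_slopesE:
  assumes "z \<in> closure (slopes f)"
  obtains xs ys where "\<And>n. xs n \<noteq> ys n" "(\<lambda>n. (f (xs n) - f (ys n)) /\<^sub>R norm (xs n - ys n)) \<longlonglongrightarrow> z"
proof -
  obtain \<sigma> where "\<And>n. \<sigma> n \<in> slopes f" "\<sigma> \<longlonglongrightarrow> z"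
    using assms unfolding closure_sequential by blast
  have "\<forall>n. \<exists>p. fst p \<noteq> snd p \<and> \<sigma> n = (f (fst p) - f (snd p)) /\<^sub>R norm (fst p - snd p)"
  proof
    fix n
    obtain x y where "x \<noteq> y" "\<sigma> n = (f x - f y) /\<^sub>R norm (x - y)"
      using \<open>\<sigma> n \<in> slopes f\<close> unfolding slopes_def by blast
    then show "\<exists>p. fst p \<noteq> snd p \<and> \<sigma> n = (f (fst p) - f (snd p)) /\<^sub>R norm (fst p - snd p)"
      by (intro exI[of _ "(x, y)"]) simp
  qed
  then obtain p where p: "\<And>n. fst (p n) \<noteq> snd (p n)"
    "\<And>n. \<sigma> n = (f (fst (p n)) - f (snd (p n))) /\<^sub>R norm (fst (p n) - snd (p n))"
    by metis
  have "\<sigma> = (\<lambda>n. (f (fst (p n)) - f (snd (p n))) /\<^sub>R norm (fst (p n) - snd (p n)))"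
    using p(2) by (rule ext)
  with \<open>\<sigma> \<longlonglongrightarrow> z\<close> show thesis
    using p(1) by (intro that[of "\<lambda>n. fst (p n)" "\<lambda>n. snd (p n)"]) simp_all
qed

lemma Lip0K_subset_Aset:
  assumes "\<exists>a::'a::real_normed_vector. a \<noteq> 0"
  shows "(Lip0K :: ('a \<Rightarrow> 'b::real_normed_vector) set) \<subseteq> Aset"
proof
  fix f :: "'a \<Rightarrow> 'b"
  assume "f \<in> Lip0K"
  then have "f \<in> Lip0" and "compact (closure (slopes f))"
    by (simp_all add: Lip0K_def)
  obtain a :: 'a where "a \<noteq> 0"
    using assms by blast
  have "(f a - f 0) /\<^sub>R norm (a - 0) \<in> closure (slopes f)"
    using slopesI[OF \<open>a \<noteq> 0\<close>, where f=f] closure_subset by blast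
  then have "closure (slopes f) \<noteq> {}"
    by (metis empty_iff)
  then obtain z where z: "z \<in> closure (slopes f)" and z_max: "\<And>w. w \<in> closure (slopes f) \<Longrightarrow> norm w \<le> norm z"
    using continuous_attains_sup[OF \<open>compact (closure (slopes f))\<close> _ continuous_on_norm_id] by blast
  have "slopes f \<subseteq> cball 0 (lipnorm f)"
    using lipnorm_ge_quotient[OF \<open>f \<in> Lip0\<close>] by (auto simp: slopes_def divide_inverse_commute)
  then have "closure (slopes f) \<subseteq> cball 0 (lipnorm f)"
    by (rule closure_minimal[OF _ closed_cball])
  then have "norm z \<le> lipnorm f"
    using z by auto
  moreover have "lipnorm f \<le> norm z"
  proof (rule lipnorm_le[OF assms])
    fix x y :: 'a assume "x \<noteq> y"
    then show "norm (f x - f y) / norm (x - y) \<le> norm z"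
      using z_max[OF subsetD[OF closure_subset slopesI[OF \<open>x \<noteq> y\<close>]]] by (simp add: divide_inverse_commute)
  qed
  ultimately have "norm z = lipnorm f"
    by linarith
  obtain xs ys where "\<And>n. xs n \<noteq> ys n"
    "(\<lambda>n. (f (xs n) - f (ys n)) /\<^sub>R norm (xs n - ys n)) \<longlonglongrightarrow> z"
    using closure_slopesE[OF z] by blast
  with \<open>norm z = lipnorm f\<close> show "f \<in> Aset"
    using \<open>f \<in> Lip0\<close> unfolding Aset_def by blast
qed

theorem proposition2p9:
  assumes nontriv: "\<exists>x::'a::banach. x \<noteq> 0"
  shows "(SA \<inter> Lip0K :: ('a \<Rightarrow> 'b::banach) set) \<subseteq> Dset \<inter> Lip0K
       \<and> (Dset \<inter> Lip0K :: ('a \<Rightarrow> 'b) set) \<subseteq> LDA \<inter> Lip0K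
       \<and> (LDA \<inter> Lip0K :: ('a \<Rightarrow> 'b) set) \<subseteq> DA \<inter> Lip0K
       \<and> (DA \<inter> Lip0K :: ('a \<Rightarrow> 'b) set) \<subseteq> Aset \<inter> Lip0K
       \<and> (Aset \<inter> Lip0K :: ('a \<Rightarrow> 'b) set) = Lip0K"
proof (intro conjI)
  show "(SA \<inter> Lip0K :: ('a \<Rightarrow> 'b) set) \<subseteq> Dset \<inter> Lip0K"
    using SA_compact_slopes_imp_Dset by (auto simp: Lip0K_def)
  show "(Dset \<inter> Lip0K :: ('a \<Rightarrow> 'b) set) \<subseteq> LDA \<inter> Lip0K"
    using Dset_subset_LDA by blast
  show "(LDA \<inter> Lip0K :: ('a \<Rightarrow> 'b) set) \<subseteq> DA \<inter> Lip0K"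
    using LDA_subset_DA by blast
  show "(DA \<inter> Lip0K :: ('a \<Rightarrow> 'b) set) \<subseteq> Aset \<inter> Lip0K"
    using DA_subset_Aset by blast
  show "(Aset \<inter> Lip0K :: ('a \<Rightarrow> 'b) set) = Lip0K"
    using Lip0K_subset_Aset[OF nontriv] by blast
qed

end
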